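(* In the two-parallel-path setting with the linear decision rule, suppose $l_v=0$ for all vertices, $m<n$, all initial pheromone levels are positive, $f_s(t)=\lambda^tf_s(0)$ and $b_d(t)=\lambda^tb_d(0)$ with $\lambda>1$ and $f_s(0),b_d(0)>0$, and the initial flows at vertices other than $s,d$ satisfy $f_v(0)\le f_s(0)$, $b_v(0)\le b_d(0)$. Let $T_1=\max_{(u,v)\in E}\log(p_{uv}(0)/(f_s(0)+b_d(0)))/\log(1/\delta)$. Then for every integer $t\ge L+\max(0,T_1)$, $$r_{\min}(t+L)\ \ge\ \left(1+\frac{\min(f_s(0),b_d(0))\,(1-\delta)(\lambda-1)}{6\,(f_s(0)+b_d(0))\,\lambda^{m}}\right)r_{\min}(t).$$
   Context: Model (linear decision rule). Directed graph $G=(V,E)$, source $s$, destination $d$, discrete time; pheromone $p_{uv}(t)$, forward flows $f_v(t)$, backward flows $b_v(t)$; leakages $l_v\in[0,1]$; decay $\delta\in(0,1)$; exogenous inputs $f_s(t),b_d(t)$. Edge flows: $f_{uv}(t)=f_u(t)p_{uv}(t)/\sum_{z:(u,z)\in E}p_{uz}(t)$, $b_{uv}(t)=b_v(t)p_{uv}(t)/\sum_{z:(z,v)\in E}p_{zv}(t)$ (at a vertex with a single outgoing, resp. incoming, edge the whole flow goes along it). Updates: $f_v(t+1)=(1-l_v)\sum_{z:(z,v)\in E}f_{zv}(t)$ for $v\neq s$, $b_u(t+1)=(1-l_u)\sum_{z:(u,z)\in E}b_{uz}(t)$ for $u\ne d$, $p_{uv}(t+1)=\delta(p_{uv}(t)+f_{uv}(t)+b_{uv}(t))$.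 Two parallel paths: $G$ is the union of directed paths $P_1,P_2$ from $s$ to $d$ sharing only $s,d$; $s_1,s_2$ are the successors of $s$ and $d_1,d_2$ the predecessors of $d$ on $P_1,P_2$; $m=\mathrm{len}(P_1)$, $n=\mathrm{len}(P_2)$ (numbers of edges), $L=\max(m,n)$. Potential: $r_{ss_1}(t)=p_{ss_1}(t)/p_{ss_2}(t)$, $r_{d_1d}(t)=p_{d_1d}(t)/p_{d_2d}(t)$, and for $t\ge L$, $r_{\min}(t)=\min\{r_{ss_1}(t-i),\,r_{d_1d}(t-i):0\le i\le L-1\}$. *)

theory Defs
  imports Complex_Main
begin

datatype vtx = S | D | A nat | B nat

definition node1 :: "nat \<Rightarrow> nat \<Rightarrow> vtx" where
  "node1 m k = (if k = 0 then S else if k = m then D else A k)"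

definition node2 :: "nat \<Rightarrow> nat \<Rightarrow> vtx" where
  "node2 n k = (if k = 0 then S else if k = n then D else B k)"

definition edges :: "nat \<Rightarrow> nat \<Rightarrow> (vtx \<times> vtx) set" where
  "edges m n = {(node1 m k, node1 m (Suc k)) | k. k < m}
             \<union> {(node2 n k, node2 n (Suc k)) | k. k < n}"

definition fflow :: "(vtx \<times> vtx) set \<Rightarrow> (vtx \<Rightarrow> vtx \<Rightarrow> real) \<Rightarrow> (vtx \<Rightarrow> real) \<Rightarrow> vtx \<Rightarrow> vtx \<Rightarrow> real" where
  "fflow E p f u v = f u * p u v / (\<Sum>z | (u, z) \<in> E. p u z)"

definition bflow :: "(vtx \<times> vtx) set \<Rightarrow> (vtx \<Rightarrow> vtx \<Rightarrow> real) \<Rightarrow> (vtx \<Rightarrow> real) \<Rightarrow> vtx \<Rightarrow> vtx \<Rightarrow> real" where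
  "bflow E p b u v = b v * p u v / (\<Sum>z | (z, v) \<in> E. p z v)"

text \<open>The update rules of the model (for all times t). The exogenous inputs
  f_s(t), b_d(t) are not constrained here.\<close>
definition dynamics ::
  "(vtx \<times> vtx) set \<Rightarrow> vtx \<Rightarrow> vtx \<Rightarrow> real \<Rightarrow> (vtx \<Rightarrow> real)
   \<Rightarrow> (nat \<Rightarrow> vtx \<Rightarrow> vtx \<Rightarrow> real) \<Rightarrow> (nat \<Rightarrow> vtx \<Rightarrow> real) \<Rightarrow> (nat \<Rightarrow> vtx \<Rightarrow> real) \<Rightarrow> bool" where
  "dynamics E s d \<delta> l p f b \<longleftrightarrow>
     (\<forall>t.
       (\<forall>v. v \<noteq> s \<longrightarrow>
          f (Suc t) v = (1 - l v) * (\<Sum>z | (z, v) \<in> E. fflow E (p t) (f t) z v)) \<and>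
       (\<forall>u. u \<noteq> d \<longrightarrow>
          b (Suc t) u = (1 - l u) * (\<Sum>z | (u, z) \<in> E. bflow E (p t) (b t) u z)) \<and>
       (\<forall>(u, v) \<in> E.
          p (Suc t) u v = \<delta> * (p t u v + fflow E (p t) (f t) u v + bflow E (p t) (b t) u v)))"

definition r_s :: "nat \<Rightarrow> nat \<Rightarrow> (nat \<Rightarrow> vtx \<Rightarrow> vtx \<Rightarrow> real) \<Rightarrow> nat \<Rightarrow> real" where
  "r_s m n p t = p t S (node1 m 1) / p t S (node2 n 1)"

definition r_d :: "nat \<Rightarrow> nat \<Rightarrow> (nat \<Rightarrow> vtx \<Rightarrow> vtx \<Rightarrow> real) \<Rightarrow> nat \<Rightarrow> real" where
  "r_d m n p t = p t (node1 m (m - 1)) D / p t (node2 n (n - 1)) D"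

definition r_min :: "nat \<Rightarrow> nat \<Rightarrow> (nat \<Rightarrow> vtx \<Rightarrow> vtx \<Rightarrow> real) \<Rightarrow> nat \<Rightarrow> real" where
  "r_min m n p t =
     Min ((\<lambda>i. r_s m n p (t - i)) ` {..<max m n} \<union> (\<lambda>i. r_d m n p (t - i)) ` {..<max m n})"

end

theory Submission
  imports Defs
begin

text \<open>Let R be the smallest of the ratios r_ss1, r_d1d over the last L = n steps. In one step
  the pheromone on a source edge grows by its share of the forward input and by the backward
  flow that arrived along its branch. Backward flow needs m - 1, resp. n - 1, steps to travel
  from d to s, so with inputs growing like \<lambda>^t the short branch delivers the more recent and
  larger flow, a surplus of at least (\<lambda> - 1) \<lambda>^(\<tau> - m) b_d(0) at time \<tau>. Once the initial
  pheromone has decayed (t \<ge> T_1), the pheromone on the source edges is at most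
  4 (f_s(0) + b_d(0)) \<lambda>^\<tau> / (1 - \<delta>), so the surplus is a fixed fraction of everything entering
  the update, and every new ratio is at least (1 + c) R. After L steps the whole window lies
  beyond t. Reversing all edges and exchanging forward and backward flows maps the system to
  one of the same kind and exchanges r_ss1 with r_d1d, so only the source side is computed.\<close>

lemma share_lower_bound:
  fixes x y R :: real
  assumes "0 < x" "0 < y" "0 \<le> R" "R * y \<le> x"
  shows "R / (1 + R) \<le> x / (x + y)"
  using assms by (simp add: divide_simps algebra_simps)

lemma share_upper_bound:
  fixes x y R :: real
  assumes "0 < x" "0 < y" "0 \<le> R" "R * y \<le> x"
  shows "y / (x + y) \<le> 1 / (1 + R)"
  using assms by (simp add: divide_simps algebra_simps)

text \<open>The update of the pheromone p1, p2 on the two source edges: F is the forward input, split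
  in proportion p1 : p2, and g1, g2 are the backward flows arriving along the two branches, which
  were split at the sink in proportion u1 : u2, resp. w1 : w2.\<close>

lemma ratio_update_gain:
  fixes R c F g1 g2 p1 p2 u1 u2 w1 w2 :: real
  assumes R: "0 \<le> R" and c: "0 \<le> c" and F: "0 \<le> F" and g2: "0 \<le> g2"
    and pos: "0 < p1" "0 < p2" "0 < u1" "0 < u2" "0 < w1" "0 < w2"
    and p: "R * p2 \<le> p1" and u: "R * u2 \<le> u1" and w: "R * w2 \<le> w1"
    and gain: "c * (p1 + p2 + F + g2) \<le> g1 - g2"
  shows "(1 + c) * R * (p2 + F * (p2 / (p1 + p2)) + g2 * (w2 / (w1 + w2)))
         \<le> p1 + F * (p1 / (p1 + p2)) + g1 * (u1 / (u1 + u2))"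
proof -
  define e where "e = 1 / (1 + R)"
  have Re: "0 \<le> R * e" and e: "e * (1 + R) = 1" using R by (simp_all add: e_def)
  have g1: "g2 + c * ((1 + R) * p2 + F + g2) \<le> g1"
  proof -
    have "c * ((1 + R) * p2) \<le> c * (p1 + p2)"
      using c p by (intro mult_left_mono) (simp add: algebra_simps)
    then show ?thesis using gain by (simp add: algebra_simps)
  qed
  have Fp: "R * (F * (p2 / (p1 + p2))) \<le> F * (p1 / (p1 + p2))"
  proof -
    have "R * p2 / (p1 + p2) \<le> p1 / (p1 + p2)" using p pos by (simp add: divide_right_mono)
    then show ?thesis
      using mult_left_mono[OF _ F] by (metis mult.left_commute times_divide_eq_right)
  qed
  have gu: "R * e * g1 \<le> g1 * (u1 / (u1 + u2))"
  proof -
    have "0 \<le> c * ((1 + R) * p2 + F + g2)" using c F g2 R pos by simp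
    then have "0 \<le> g1" using g1 g2 by linarith
    then show ?thesis
      using mult_left_mono[OF share_lower_bound[OF pos(3,4) R u]] unfolding e_def
      by (metis mult.commute times_divide_eq_right mult_1_right)
  qed
  have Fe: "F * (p2 / (p1 + p2)) \<le> F * e"
    using mult_left_mono[OF share_upper_bound[OF pos(1,2) R p] F] by (simp add: e_def)
  have ge: "g2 * (w2 / (w1 + w2)) \<le> g2 * e"
    using mult_left_mono[OF share_upper_bound[OF pos(5,6) R w] g2] by (simp add: e_def)
  have "(1 + c) * R * (p2 + F * (p2 / (p1 + p2)) + g2 * (w2 / (w1 + w2)))
      = R * p2 + R * (F * (p2 / (p1 + p2))) + R * (g2 * (w2 / (w1 + w2)))
        + c * R * (p2 + F * (p2 / (p1 + p2)) + g2 * (w2 / (w1 + w2)))"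
    by (simp add: algebra_simps add_divide_distrib)
  also have "\<dots> \<le> R * p2 + R * (F * (p2 / (p1 + p2))) + R * (g2 * e)
      + c * R * (p2 + F * e + g2 * e)"
  proof -
    have "p2 + F * (p2 / (p1 + p2)) + g2 * (w2 / (w1 + w2)) \<le> p2 + F * e + g2 * e"
      using Fe ge by linarith
    then have "c * R * (p2 + F * (p2 / (p1 + p2)) + g2 * (w2 / (w1 + w2)))
        \<le> c * R * (p2 + F * e + g2 * e)" using c R by (simp add: mult_left_mono)
    then show ?thesis using mult_left_mono[OF ge R] by linarith
  qed
  also have "\<dots> = R * p2 + R * (F * (p2 / (p1 + p2)))
      + R * e * (g2 + c * ((1 + R) * p2 + F + g2))"
  proof -
    have "R * e * (c * ((1 + R) * p2)) = c * R * p2 * (e * (1 + R))"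
      by (simp add: algebra_simps)
    then show ?thesis unfolding e by (simp add: algebra_simps)
  qed
  also have "\<dots> \<le> p1 + F * (p1 / (p1 + p2)) + g1 * (u1 / (u1 + u2))"
    using mult_left_mono[OF g1 Re] Fp gu p by linarith
  finally show ?thesis .
qed

lemma damped_recurrence_bound:
  fixes X :: "nat \<Rightarrow> real" and d lam C :: real
  assumes d: "0 < d" "d < 1" and lam: "1 < lam" and C: "0 \<le> C"
    and rec: "\<And>t. X (Suc t) \<le> d * (X t + C * lam ^ t)"
  shows "X t \<le> d ^ t * X 0 + C * lam ^ t * d / (lam - d)"
proof (induction t)
  case 0
  show ?case using d lam C by simp
next
  case (Suc t)
  have "X (Suc t) \<le> d * (d ^ t * X 0 + C * lam ^ t * d / (lam - d) + C * lam ^ t)"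
    using rec[of t] Suc d by (smt (verit) mult_left_mono)
  also have "\<dots> = d ^ Suc t * X 0 + C * lam ^ Suc t * d / (lam - d)"
    using d lam by (simp add: field_simps)
  finally show ?case .
qed

lemma damped_recurrence_bound_geometric:
  fixes X :: "nat \<Rightarrow> real" and d lam C :: real
  assumes d: "0 < d" "d < 1" and lam: "1 < lam" and C: "0 \<le> C"
    and rec: "\<And>t. X (Suc t) \<le> d * (X t + C * lam ^ t)"
    and init: "d ^ t * X 0 \<le> C"
  shows "X t \<le> 2 * C * lam ^ t / (1 - d)"
proof -
  have "d / (lam - d) \<le> 1 / (1 - d)" using d lam by (simp add: frac_le)
  moreover have "0 \<le> C * lam ^ t" using C lam by simp
  ultimately have "C * lam ^ t * d / (lam - d) \<le> C * lam ^ t / (1 - d)"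
    using mult_left_mono by fastforce
  moreover have "C \<le> C * lam ^ t / (1 - d)"
  proof -
    have "1 \<le> lam ^ t" using lam by simp
    then have "1 \<le> lam ^ t / (1 - d)" using d by (simp add: le_divide_eq)
    then show ?thesis using mult_left_mono[OF _ C] by fastforce
  qed
  moreover have "2 * C * lam ^ t / (1 - d) = C * lam ^ t / (1 - d) + C * lam ^ t / (1 - d)"
    by (simp add: add_divide_distrib[symmetric])
  ultimately show ?thesis
    using damped_recurrence_bound[OF d lam C rec, of t] init by linarith
qed

lemma power_mult_le_of_log_ratio_le:
  fixes d x K :: real
  assumes d: "0 < d" "d < 1" and pos: "0 < x" "0 < K"
    and le: "ln (x / K) / ln (1 / d) \<le> real \<tau>"
  shows "d ^ \<tau> * x \<le> K"
proof -
  have "ln (x / K) \<le> ln ((1 / d) ^ \<tau>)"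
    using le d by (simp add: divide_le_eq ln_realpow mult.commute)
  then have "x / K \<le> 1 / d ^ \<tau>" using pos d by (simp add: power_one_over)
  then show ?thesis using pos d by (simp add: field_simps)
qed

lemma gain_coefficient_bound:
  fixes lam dlt G H P :: real and m n \<tau> :: nat
  assumes lam: "1 < lam" and dlt: "0 < dlt" "dlt < 1" and G: "0 < G" and H: "0 < H"
    and mn: "1 \<le> m" "m < n" and \<tau>: "n - 1 \<le> \<tau>"
    and P: "P \<le> 4 * (H + G) * lam ^ \<tau> / (1 - dlt)"
  shows "min H G * (1 - dlt) * (lam - 1) / (6 * (H + G) * lam ^ m)
           * (P + lam ^ \<tau> * H + lam ^ (\<tau> - (n - 1)) * G)
         \<le> lam ^ (\<tau> - (m - 1)) * G - lam ^ (\<tau> - (n - 1)) * G"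
proof -
  define X where "X = lam ^ (\<tau> - m)"
  define Y where "Y = lam ^ (\<tau> - (n - 1))"
  define K where "K = H + G"
  define c where "c = min H G * (1 - dlt) * (lam - 1) / (6 * K * lam ^ m)"
  have X: "0 < X" using lam by (simp add: X_def)
  have K: "0 < K" using G H by (simp add: K_def)
  have c: "0 \<le> c" using G H dlt lam K by (simp add: c_def)
  have lam_\<tau>: "lam ^ \<tau> = X * lam ^ m"
    unfolding X_def using mn \<tau> by (simp add: power_add[symmetric])
  have lam_m1: "lam ^ (\<tau> - (m - 1)) = X * lam"
  proof -
    have "\<tau> - (m - 1) = Suc (\<tau> - m)" using mn \<tau> by arith
    then show ?thesis by (simp add: X_def mult.commute)
  qed
  have YX: "Y \<le> X" unfolding X_def Y_def using lam mn \<tau> by (intro power_increasing) auto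
  have lam_m: "1 \<le> lam ^ m" using lam by simp
  have "P + lam ^ \<tau> * H + Y * G \<le> 4 * K * (X * lam ^ m) / (1 - dlt) + X * lam ^ m * K"
  proof -
    have "Y * G \<le> X * G" using YX G by (intro mult_right_mono) auto
    also have "X * G \<le> X * G * lam ^ m" using lam_m X G by simp
    finally show ?thesis using P lam_\<tau> unfolding K_def by (simp add: algebra_simps)
  qed
  also have "\<dots> \<le> X * lam ^ m * K * 5 / (1 - dlt)"
  proof -
    have "X * lam ^ m * K \<le> X * lam ^ m * K / (1 - dlt)"
      using X K lam_m dlt by (simp add: le_divide_eq)
    moreover have "X * lam ^ m * K * 5 / (1 - dlt)
        = X * lam ^ m * K / (1 - dlt) + 4 * K * (X * lam ^ m) / (1 - dlt)"
      by (simp add: add_divide_distrib[symmetric] algebra_simps)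
    ultimately show ?thesis by linarith
  qed
  finally have "c * (P + lam ^ \<tau> * H + Y * G) \<le> c * (X * lam ^ m * K * 5 / (1 - dlt))"
    using c by (rule mult_left_mono)
  also have "\<dots> = min H G * (lam - 1) * X * 5 / 6"
    using dlt K lam unfolding c_def by (simp add: field_simps)
  also have "\<dots> \<le> G * (lam - 1) * X"
    using G H X lam by (simp add: min_def mult_left_mono)
  also have "\<dots> \<le> X * lam * G - Y * G" using YX G by (simp add: algebra_simps)
  finally show ?thesis unfolding c_def K_def Y_def lam_m1 by simp
qed

lemma window_growth:
  fixes z :: "nat \<Rightarrow> real" and c R :: real and t L :: nat
  assumes c: "0 \<le> c" and R: "0 \<le> R"
    and start: "\<And>\<sigma>. \<sigma> \<le> t \<Longrightarrow> t < \<sigma> + L \<Longrightarrow> R \<le> z \<sigma>"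
    and step: "\<And>\<tau>. t \<le> \<tau> \<Longrightarrow> (\<And>\<sigma>. \<sigma> \<le> \<tau> \<Longrightarrow> \<tau> < \<sigma> + L \<Longrightarrow> R \<le> z \<sigma>)
        \<Longrightarrow> (1 + c) * R \<le> z (Suc \<tau>)"
  shows "t < \<sigma> \<Longrightarrow> \<sigma> \<le> t + L \<Longrightarrow> (1 + c) * R \<le> z \<sigma>"
proof (induction \<sigma> rule: less_induct)
  case (less \<sigma>)
  then obtain \<tau> where \<sigma>: "\<sigma> = Suc \<tau>" and \<tau>: "t \<le> \<tau>"
    by (metis less_imp_Suc_add add_Suc_right le_add1)
  have "R \<le> (1 + c) * R" using c R by (simp add: distrib_right)
  then have "R \<le> z \<sigma>'" if "\<sigma>' \<le> \<tau>" "\<tau> < \<sigma>' + L" for \<sigma>'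
    using that start less.IH[of \<sigma>'] less.prems \<sigma> by (cases "\<sigma>' \<le> t") force+
  then show ?case using step[OF \<tau>] \<sigma> by blast
qed

lemma fflow_nonneg:
  assumes "0 \<le> f u" "\<forall>(x, y) \<in> E. 0 < p x y" "(u, v) \<in> E"
  shows "0 \<le> fflow E p f u v"
proof -
  have "0 \<le> (\<Sum>z | (u, z) \<in> E. p u z)" using assms(2) by (intro sum_nonneg) fastforce
  then show ?thesis using assms unfolding fflow_def by fastforce
qed

lemma fflow_le:
  assumes "0 \<le> f u" "\<forall>(x, y) \<in> E. 0 < p x y" "(u, v) \<in> E"
  shows "fflow E p f u v \<le> f u"
proof (cases "finite {z. (u, z) \<in> E}")
  case True
  have "p u v \<le> (\<Sum>z | (u, z) \<in> E. p u z)"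
    using True assms(2,3) by (intro member_le_sum) fastforce+
  moreover have "0 < p u v" using assms by auto
  ultimately have "p u v / (\<Sum>z | (u, z) \<in> E. p u z) \<le> 1" by simp
  then show ?thesis using mult_left_mono[OF _ assms(1)] unfolding fflow_def by fastforce
next
  case False
  then show ?thesis using assms(1) unfolding fflow_def by simp
qed

lemma fflow_converse: "fflow (E\<inverse>) (\<lambda>u v. p v u) b v u = bflow E p b u v"
  unfolding fflow_def bflow_def by simp

lemma bflow_converse: "bflow (E\<inverse>) (\<lambda>u v. p v u) f v u = fflow E p f u v"
  unfolding fflow_def bflow_def by simp

lemma bflow_nonneg:
  assumes "0 \<le> b v" "\<forall>(x, y) \<in> E. 0 < p x y" "(u, v) \<in> E"
  shows "0 \<le> bflow E p b u v"
  using fflow_nonneg[of b v "E\<inverse>" "\<lambda>u v. p v u" u] assms by (auto simp: fflow_converse)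

lemma bflow_le:
  assumes "0 \<le> b v" "\<forall>(x, y) \<in> E. 0 < p x y" "(u, v) \<in> E"
  shows "bflow E p b u v \<le> b v"
  using fflow_le[of b v "E\<inverse>" "\<lambda>u v. p v u" u] assms by (auto simp: fflow_converse)

lemma bflow_single:
  "{z. (z, v) \<in> E} = {u} \<Longrightarrow> p u v \<noteq> 0 \<Longrightarrow> bflow E p b u v = b v"
  unfolding bflow_def by simp

lemma fflow_pair:
  "{z. (u, z) \<in> E} = {a, c} \<Longrightarrow> a \<noteq> c \<Longrightarrow>
    fflow E p f u a = f u * (p u a / (p u a + p u c))"
  unfolding fflow_def by simp

lemma bflow_pair:
  "{z. (z, v) \<in> E} = {a, c} \<Longrightarrow> a \<noteq> c \<Longrightarrow>
    bflow E p b a v = b v * (p a v / (p a v + p c v))"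
  unfolding bflow_def by simp

lemma dynamics_converse:
  "dynamics E s d dlt l p f b \<Longrightarrow> dynamics (E\<inverse>) d s dlt l (\<lambda>t u v. p t v u) b f"
  unfolding dynamics_def by (auto simp: fflow_converse bflow_converse add_ac)

text \<open>An s-d path whose interior vertices have in- and out-degree one: flow entering it is only
  delayed.\<close>

definition branch_path ::
  "(vtx \<times> vtx) set \<Rightarrow> vtx \<Rightarrow> vtx \<Rightarrow> (nat \<Rightarrow> vtx) \<Rightarrow> nat \<Rightarrow> bool" where
  "branch_path E s d P len \<longleftrightarrow>
     P 0 = s \<and> P len = d \<and> (\<forall>k < len. (P k, P (Suc k)) \<in> E) \<and>
     (\<forall>k. 0 < k \<and> k < len \<longrightarrow> P k \<noteq> s \<and> P k \<noteq> d \<and>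
        {z. (z, P k) \<in> E} = {P (k - 1)} \<and> {z. (P k, z) \<in> E} = {P (Suc k)})"

lemma branch_pathD:
  assumes "branch_path E s d P len"
  shows "P 0 = s" "P len = d" "k < len \<Longrightarrow> (P k, P (Suc k)) \<in> E"
    and "0 < k \<Longrightarrow> k < len \<Longrightarrow> P k \<noteq> s" "0 < k \<Longrightarrow> k < len \<Longrightarrow> P k \<noteq> d"
    and "0 < k \<Longrightarrow> k < len \<Longrightarrow> {z. (z, P k) \<in> E} = {P (k - 1)}"
    and "0 < k \<Longrightarrow> k < len \<Longrightarrow> {z. (P k, z) \<in> E} = {P (Suc k)}"
  using assms unfolding branch_path_def by auto

lemma branch_path_first_edge: "branch_path E s d P len \<Longrightarrow> 0 < len \<Longrightarrow> (s, P 1) \<in> E"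
  using branch_pathD(1,3) by fastforce

lemma branch_path_converse:
  assumes "branch_path E s d P len"
  shows "branch_path (E\<inverse>) d s (\<lambda>k. P (len - k)) len"
  unfolding branch_path_def
proof (intro conjI allI impI)
  show "P (len - 0) = d" "P (len - len) = s" using assms by (simp_all add: branch_path_def)
next
  fix k assume "k < len"
  then have "(P (len - Suc k), P (Suc (len - Suc k))) \<in> E"
    using assms by (simp add: branch_path_def)
  then show "(P (len - k), P (len - Suc k)) \<in> E\<inverse>"
    using \<open>k < len\<close> by (simp add: Suc_diff_Suc)
next
  fix k assume k: "0 < k \<and> k < len"
  then have j: "0 < len - k" "len - k < len"
    and succ: "Suc (len - k) = len - (k - 1)" and pred: "len - k - 1 = len - Suc k" by auto
  have "P (len - k) \<noteq> s \<and> P (len - k) \<noteq> d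
      \<and> {z. (z, P (len - k)) \<in> E} = {P (len - k - 1)}
      \<and> {z. (P (len - k), z) \<in> E} = {P (Suc (len - k))}"
    using assms j by (simp add: branch_path_def)
  then show "P (len - k) \<noteq> d" "P (len - k) \<noteq> s"
    "{z. (z, P (len - k)) \<in> E\<inverse>} = {P (len - (k - 1))}"
    "{z. (P (len - k), z) \<in> E\<inverse>} = {P (len - Suc k)}"
    unfolding succ pred by simp_all
qed

locale two_branch_graph =
  fixes E :: "(vtx \<times> vtx) set" and s d :: vtx
    and P1 :: "nat \<Rightarrow> vtx" and m :: nat and P2 :: "nat \<Rightarrow> vtx" and n :: nat
  assumes branch1: "branch_path E s d P1 m" and branch2: "branch_path E s d P2 n"
    and out_source: "{z. (s, z) \<in> E} = {P1 1, P2 1}"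
    and in_sink: "{z. (z, d) \<in> E} = {P1 (m - 1), P2 (n - 1)}"
    and first_distinct: "P1 1 \<noteq> P2 1" and last_distinct: "P1 (m - 1) \<noteq> P2 (n - 1)"
    and lengths: "1 \<le> m" "m < n"

lemma (in two_branch_graph) source_edges: "(s, P1 1) \<in> E" "(s, P2 1) \<in> E"
  using out_source by blast+

lemma (in two_branch_graph) sink_edges: "(P1 (m - 1), d) \<in> E" "(P2 (n - 1), d) \<in> E"
  using in_sink by blast+

lemma two_branch_graph_converse:
  assumes "two_branch_graph E s d P1 m P2 n"
  shows "two_branch_graph (E\<inverse>) d s (\<lambda>k. P1 (m - k)) m (\<lambda>k. P2 (n - k)) n"
proof -
  interpret two_branch_graph E s d P1 m P2 n by (rule assms)
  have "m - (m - 1) = 1" "n - (n - 1) = 1" using lengths by auto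
  show ?thesis
  proof unfold_locales
    show "branch_path (E\<inverse>) d s (\<lambda>k. P1 (m - k)) m"
      "branch_path (E\<inverse>) d s (\<lambda>k. P2 (n - k)) n"
      using branch1 branch2 by (simp_all add: branch_path_converse)
    show "{z. (d, z) \<in> E\<inverse>} = {P1 (m - 1), P2 (n - 1)}" using in_sink by simp
    show "{z. (z, s) \<in> E\<inverse>} = {P1 (m - (m - 1)), P2 (n - (n - 1))}"
      using out_source \<open>m - (m - 1) = 1\<close> \<open>n - (n - 1) = 1\<close> by simp
  qed (use first_distinct last_distinct lengths in simp_all)
qed

locale ant_system = two_branch_graph +
  fixes dlt lam :: real and p :: "nat \<Rightarrow> vtx \<Rightarrow> vtx \<Rightarrow> real"
    and f b :: "nat \<Rightarrow> vtx \<Rightarrow> real"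
  assumes dyn: "dynamics E s d dlt (\<lambda>_. 0) p f b"
    and dlt: "0 < dlt" "dlt < 1" and lam: "1 < lam"
    and p_init: "\<forall>(u, v) \<in> E. 0 < p 0 u v"
    and f_source: "\<And>t. f t s = lam ^ t * f 0 s" and b_sink: "\<And>t. b t d = lam ^ t * b 0 d"
    and f_source_pos: "0 < f 0 s" and b_sink_pos: "0 < b 0 d"
    and f_init: "\<And>v. 0 \<le> f 0 v" "\<And>v. v \<noteq> s \<Longrightarrow> v \<noteq> d \<Longrightarrow> f 0 v \<le> f 0 s"
    and b_init: "\<And>v. 0 \<le> b 0 v" "\<And>v. v \<noteq> s \<Longrightarrow> v \<noteq> d \<Longrightarrow> b 0 v \<le> b 0 d"

lemma ant_system_converse:
  assumes "ant_system E s d P1 m P2 n dlt lam p f b"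
  shows "ant_system (E\<inverse>) d s (\<lambda>k. P1 (m - k)) m (\<lambda>k. P2 (n - k)) n dlt lam
    (\<lambda>t u v. p t v u) b f"
proof -
  interpret ant_system E s d P1 m P2 n dlt lam p f b by (rule assms)
  show ?thesis
  proof (intro ant_system.intro ant_system_axioms.intro)
    show "two_branch_graph (E\<inverse>) d s (\<lambda>k. P1 (m - k)) m (\<lambda>k. P2 (n - k)) n"
      by (rule two_branch_graph_converse[OF two_branch_graph_axioms])
    show "dynamics (E\<inverse>) d s dlt (\<lambda>_. 0) (\<lambda>t u v. p t v u) b f"
      by (rule dynamics_converse[OF dyn])
    show "\<forall>(u, v) \<in> E\<inverse>. 0 < p 0 v u" using p_init by auto
  qed (use dlt lam b_sink f_source b_sink_pos f_source_pos f_init b_init in blast)+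
qed

context ant_system
begin

lemma f_step:
  "v \<noteq> s \<Longrightarrow> f (Suc t) v = (\<Sum>z | (z, v) \<in> E. fflow E (p t) (f t) z v)"
  using dyn unfolding dynamics_def by simp

lemma b_step:
  "u \<noteq> d \<Longrightarrow> b (Suc t) u = (\<Sum>z | (u, z) \<in> E. bflow E (p t) (b t) u z)"
  using dyn unfolding dynamics_def by simp

lemma p_step: "(u, v) \<in> E \<Longrightarrow>
    p (Suc t) u v = dlt * (p t u v + fflow E (p t) (f t) u v + bflow E (p t) (b t) u v)"
  using dyn unfolding dynamics_def by auto

lemma positivity_invariant:
  "(\<forall>(u, v) \<in> E. 0 < p t u v) \<and> (\<forall>v. 0 \<le> f t v) \<and> (\<forall>v. 0 \<le> b t v)"
proof (induction t)
  case 0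
  show ?case using p_init f_init b_init by auto
next
  case (Suc t)
  then have p: "\<forall>(u, v) \<in> E. 0 < p t u v" and f: "\<And>v. 0 \<le> f t v"
    and b: "\<And>v. 0 \<le> b t v" by auto
  have "0 < p (Suc t) u v" if "(u, v) \<in> E" for u v
  proof -
    have "0 \<le> fflow E (p t) (f t) u v" "0 \<le> bflow E (p t) (b t) u v" "0 < p t u v"
      using fflow_nonneg[OF f p that] bflow_nonneg[OF b p that] p that by auto
    then show ?thesis using p_step[OF that] dlt by simp
  qed
  moreover have "0 \<le> f (Suc t) v" for v
  proof (cases "v = s")
    case False
    show ?thesis
      unfolding f_step[OF False] using fflow_nonneg[OF f p] by (auto intro: sum_nonneg)
  qed (use f_source[of "Suc t"] f_source_pos lam in simp)
  moreover have "0 \<le> b (Suc t) v" for v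
  proof (cases "v = d")
    case False
    show ?thesis
      unfolding b_step[OF False] using bflow_nonneg[OF b p] by (auto intro: sum_nonneg)
  qed (use b_sink[of "Suc t"] b_sink_pos lam in simp)
  ultimately show ?case by blast
qed

lemma p_pos_on: "\<forall>(u, v) \<in> E. 0 < p t u v"
  using positivity_invariant by blast

lemma p_pos: "(u, v) \<in> E \<Longrightarrow> 0 < p t u v"
  using p_pos_on by blast

lemma f_nonneg: "0 \<le> f t v"
  using positivity_invariant by blast

lemma b_nonneg: "0 \<le> b t v"
  using positivity_invariant by blast

lemma b_step_interior:
  assumes "branch_path E s d P len" "0 < k" "k < len"
  shows "b (Suc t) (P k) = bflow E (p t) (b t) (P k) (P (Suc k))"
  using b_step[OF branch_pathD(5)[OF assms]] branch_pathD(7)[OF assms] by simp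

lemma b_branch_bound:
  assumes P: "branch_path E s d P len"
  shows "0 < k \<Longrightarrow> k \<le> len \<Longrightarrow> b t (P k) \<le> lam ^ t * b 0 d"
proof (induction t arbitrary: k)
  case 0
  show ?case
  proof (cases "k = len")
    case False
    then show ?thesis using 0 b_init(2) branch_pathD(4,5)[OF P] by simp
  qed (simp add: branch_pathD(2)[OF P])
next
  case (Suc t)
  show ?case
  proof (cases "k = len")
    case True
    then show ?thesis using b_sink[of "Suc t"] by (simp add: branch_pathD(2)[OF P])
  next
    case False
    then have k: "0 < k" "k < len" using Suc.prems by auto
    have "b (Suc t) (P k) \<le> b t (P (Suc k))"
      unfolding b_step_interior[OF P k]
      by (rule bflow_le[OF b_nonneg p_pos_on branch_pathD(3)[OF P k(2)]])
    also have "\<dots> \<le> lam ^ t * b 0 d" using Suc.IH k by simp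
    also have "\<dots> \<le> lam ^ Suc t * b 0 d" using lam b_sink_pos by simp
    finally show ?thesis .
  qed
qed

lemma bflow_transport:
  assumes P: "branch_path E s d P len"
  shows "j < len \<Longrightarrow>
    bflow E (p (\<sigma> + j)) (b (\<sigma> + j)) (P (len - Suc j)) (P (len - j))
      = bflow E (p \<sigma>) (b \<sigma>) (P (len - 1)) d"
proof (induction j)
  case 0
  then show ?case using branch_pathD(2)[OF P] by simp
next
  case (Suc j)
  define k where "k = len - Suc j"
  have k: "0 < k" "k < len" "len - Suc (Suc j) = k - 1" "len - j = Suc k"
    using Suc.prems by (auto simp: k_def)
  have "bflow E (p (\<sigma> + Suc j)) (b (\<sigma> + Suc j)) (P (k - 1)) (P k)
      = b (\<sigma> + Suc j) (P k)"
  proof (rule bflow_single)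
    show "{z. (z, P k) \<in> E} = {P (k - 1)}" using branch_pathD(6)[OF P k(1,2)] .
    have "(P (k - 1), P (Suc (k - 1))) \<in> E"
      using branch_pathD(3)[OF P, of "k - 1"] k by simp
    then have "(P (k - 1), P k) \<in> E" using k by simp
    from p_pos[OF this] show "p (\<sigma> + Suc j) (P (k - 1)) (P k) \<noteq> 0"
      by (rule less_imp_neq[symmetric])
  qed
  also have "\<dots> = bflow E (p (\<sigma> + j)) (b (\<sigma> + j)) (P k) (P (Suc k))"
    using b_step_interior[OF P k(1,2)] by simp
  also have "\<dots> = bflow E (p \<sigma>) (b \<sigma>) (P (len - 1)) d"
    using Suc.IH[OF Suc_lessD[OF Suc.prems]] unfolding k_def[symmetric] k(4) .
  finally show ?case unfolding k(3) k_def[symmetric] by simp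
qed

lemma bflow_source_delay:
  assumes P: "branch_path E s d P len" and len: "0 < len" "len - 1 \<le> \<tau>"
  shows "bflow E (p \<tau>) (b \<tau>) s (P 1)
    = bflow E (p (\<tau> - (len - 1))) (b (\<tau> - (len - 1))) (P (len - 1)) d"
proof -
  have "len - Suc (len - 1) = 0" "len - (len - 1) = 1" "\<tau> - (len - 1) + (len - 1) = \<tau>"
    using len by auto
  then show ?thesis
    using bflow_transport[OF P, of "len - 1" "\<tau> - (len - 1)"] branch_pathD(1)[OF P] len by simp
qed

lemma source_edge_inflow:
  assumes P: "branch_path E s d P len" and len: "0 < len"
  shows "fflow E (p t) (f t) s (P 1) + bflow E (p t) (b t) s (P 1)
    \<le> lam ^ t * (f 0 s + b 0 d)"
proof -
  have "fflow E (p t) (f t) s (P 1) \<le> lam ^ t * f 0 s"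
    using fflow_le[where f = "f t", OF f_nonneg p_pos_on[of t] branch_path_first_edge[OF P len]]
      f_source[of t] by simp
  moreover have "bflow E (p t) (b t) s (P 1) \<le> lam ^ t * b 0 d"
    using bflow_le[where b = "b t", OF b_nonneg p_pos_on[of t] branch_path_first_edge[OF P len]]
      b_branch_bound[OF P, of 1 t] len
    by simp
  ultimately show ?thesis by (simp add: distrib_left)
qed

lemma source_pheromone_bound:
  assumes "dlt ^ \<tau> * (p 0 s (P1 1) + p 0 s (P2 1)) \<le> 2 * (f 0 s + b 0 d)"
  shows "p \<tau> s (P1 1) + p \<tau> s (P2 1) \<le> 4 * (f 0 s + b 0 d) * lam ^ \<tau> / (1 - dlt)"
proof -
  have len: "0 < m" "0 < n" using lengths by auto
  have "p (Suc t) s (P1 1) + p (Suc t) s (P2 1)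
      \<le> dlt * (p t s (P1 1) + p t s (P2 1) + 2 * (f 0 s + b 0 d) * lam ^ t)" for t
  proof -
    have "p (Suc t) s (P1 1) + p (Suc t) s (P2 1) = dlt * (p t s (P1 1) + p t s (P2 1)
        + (fflow E (p t) (f t) s (P1 1) + bflow E (p t) (b t) s (P1 1))
        + (fflow E (p t) (f t) s (P2 1) + bflow E (p t) (b t) s (P2 1)))"
      using p_step[OF branch_path_first_edge[OF branch1 len(1)], of t]
        p_step[OF branch_path_first_edge[OF branch2 len(2)], of t] by (simp add: algebra_simps)
    also have "\<dots> \<le> dlt * (p t s (P1 1) + p t s (P2 1) + 2 * (f 0 s + b 0 d) * lam ^ t)"
    proof -
      have "2 * (f 0 s + b 0 d) * lam ^ t = lam ^ t * (f 0 s + b 0 d) + lam ^ t * (f 0 s + b 0 d)"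
        by (simp add: algebra_simps)
      then show ?thesis
        using source_edge_inflow[OF branch1 len(1), of t]
          source_edge_inflow[OF branch2 len(2), of t]
          mult_left_mono[of _ _ dlt] dlt by (smt (verit))
    qed
    finally show ?thesis .
  qed
  from damped_recurrence_bound_geometric[OF dlt lam _ this assms] f_source_pos b_sink_pos
  show ?thesis by simp
qed

definition source_ratio :: "nat \<Rightarrow> real" where
  "source_ratio t = p t s (P1 1) / p t s (P2 1)"

definition sink_ratio :: "nat \<Rightarrow> real" where
  "sink_ratio t = p t (P1 (m - 1)) d / p t (P2 (n - 1)) d"

definition gain :: real where
  "gain = min (f 0 s) (b 0 d) * (1 - dlt) * (lam - 1) / (6 * (f 0 s + b 0 d) * lam ^ m)"

lemma gain_nonneg: "0 \<le> gain"
  using f_source_pos b_sink_pos dlt lam by (simp add: gain_def)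

lemma source_ratio_step:
  assumes \<tau>: "n - 1 \<le> \<tau>"
    and p_init_le: "dlt ^ \<tau> * (p 0 s (P1 1) + p 0 s (P2 1)) \<le> 2 * (f 0 s + b 0 d)"
    and R: "0 \<le> R" and ratios: "R \<le> source_ratio \<tau>" "R \<le> sink_ratio (\<tau> - (m - 1))"
      "R \<le> sink_ratio (\<tau> - (n - 1))"
  shows "(1 + gain) * R \<le> source_ratio (Suc \<tau>)"
proof -
  define \<sigma>1 \<sigma>2 where "\<sigma>1 = \<tau> - (m - 1)" and "\<sigma>2 = \<tau> - (n - 1)"
  define p1 p2 where "p1 = p \<tau> s (P1 1)" and "p2 = p \<tau> s (P2 1)"
  define u1 u2 where "u1 = p \<sigma>1 (P1 (m - 1)) d" and "u2 = p \<sigma>1 (P2 (n - 1)) d"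
  define w1 w2 where "w1 = p \<sigma>2 (P1 (m - 1)) d" and "w2 = p \<sigma>2 (P2 (n - 1)) d"
  define F g1 g2 where "F = f \<tau> s" and "g1 = b \<sigma>1 d" and "g2 = b \<sigma>2 d"
  have len: "0 < m" "0 < n" "m - 1 \<le> \<tau>" using lengths \<tau> by auto
  have pos: "0 < p1" "0 < p2" "0 < u1" "0 < u2" "0 < w1" "0 < w2"
    unfolding p1_def p2_def u1_def u2_def w1_def w2_def
    using source_edges sink_edges by (auto intro: p_pos)
  have new1: "p (Suc \<tau>) s (P1 1) = dlt * (p1 + F * (p1 / (p1 + p2)) + g1 * (u1 / (u1 + u2)))"
    using p_step[OF source_edges(1), of \<tau>] fflow_pair[OF out_source first_distinct]
      bflow_source_delay[OF branch1 len(1,3)] bflow_pair[OF in_sink last_distinct]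
    by (simp add: p1_def p2_def u1_def u2_def F_def g1_def \<sigma>1_def)
  have new2: "p (Suc \<tau>) s (P2 1) = dlt * (p2 + F * (p2 / (p1 + p2)) + g2 * (w2 / (w1 + w2)))"
    using p_step[OF source_edges(2), of \<tau>]
      fflow_pair[OF _ first_distinct[symmetric]] bflow_source_delay[OF branch2 len(2) \<tau>]
      bflow_pair[OF _ last_distinct[symmetric]] out_source in_sink
    by (simp add: p1_def p2_def w1_def w2_def F_def g2_def \<sigma>2_def insert_commute add.commute)
  have scaled: "R * p2 \<le> p1" "R * u2 \<le> u1" "R * w2 \<le> w1"
    using ratios pos
    by (simp_all add: source_ratio_def sink_ratio_def p1_def p2_def u1_def u2_def w1_def w2_def
        \<sigma>1_def \<sigma>2_def pos_le_divide_eq)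
  have "F = lam ^ \<tau> * f 0 s" "g1 = lam ^ (\<tau> - (m - 1)) * b 0 d" "g2 = lam ^ (\<tau> - (n - 1)) * b 0 d"
    unfolding F_def g1_def g2_def \<sigma>1_def \<sigma>2_def by (rule f_source b_sink)+
  then have "gain * (p1 + p2 + F + g2) \<le> g1 - g2"
    using gain_coefficient_bound[OF lam dlt b_sink_pos f_source_pos lengths \<tau>
        source_pheromone_bound[OF p_init_le]]
    by (simp add: gain_def p1_def p2_def add.assoc)
  moreover have "0 \<le> F" "0 \<le> g2" by (simp_all add: F_def g2_def f_nonneg b_nonneg)
  ultimately have "(1 + gain) * R * (p2 + F * (p2 / (p1 + p2)) + g2 * (w2 / (w1 + w2)))
      \<le> p1 + F * (p1 / (p1 + p2)) + g1 * (u1 / (u1 + u2))"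
    using ratio_update_gain[OF R gain_nonneg _ _ pos scaled] by blast
  then have "(1 + gain) * R * p (Suc \<tau>) s (P2 1) \<le> p (Suc \<tau>) s (P1 1)"
    unfolding new1 new2 using dlt by (simp add: mult.commute mult.left_commute)
  then show ?thesis
    using p_pos[OF source_edges(2)] by (simp add: source_ratio_def pos_le_divide_eq)
qed

lemma sink_ratio_step:
  assumes \<tau>: "n - 1 \<le> \<tau>"
    and p_init_le: "dlt ^ \<tau> * (p 0 (P1 (m - 1)) d + p 0 (P2 (n - 1)) d) \<le> 2 * (f 0 s + b 0 d)"
    and R: "0 \<le> R" and ratios: "R \<le> sink_ratio \<tau>" "R \<le> source_ratio (\<tau> - (m - 1))"
      "R \<le> source_ratio (\<tau> - (n - 1))"
  shows "(1 + gain) * R \<le> sink_ratio (Suc \<tau>)"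
proof -
  interpret rev: ant_system "E\<inverse>" d s "\<lambda>k. P1 (m - k)" m "\<lambda>k. P2 (n - k)" n dlt lam
      "\<lambda>t u v. p t v u" b f
    by (rule ant_system_converse[OF ant_system_axioms])
  have "m - (m - 1) = 1" "n - (n - 1) = 1" using lengths by auto
  then have "rev.source_ratio = sink_ratio" "rev.sink_ratio = source_ratio" "rev.gain = gain"
    by (auto simp: rev.source_ratio_def rev.sink_ratio_def rev.gain_def source_ratio_def
        sink_ratio_def gain_def min.commute add.commute)
  then show ?thesis
    using rev.source_ratio_step[OF \<tau> _ R] p_init_le ratios by (simp add: add.commute)
qed

lemma source_ratio_pos: "0 < source_ratio t"
  unfolding source_ratio_def using p_pos[OF source_edges(1)] p_pos[OF source_edges(2)] by simp

lemma sink_ratio_pos: "0 < sink_ratio t"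
  unfolding sink_ratio_def using p_pos[OF sink_edges(1)] p_pos[OF sink_edges(2)] by simp

lemma ratio_window_growth:
  assumes t: "n \<le> t"
    and p_init_le: "\<And>\<tau> u v. t \<le> \<tau> \<Longrightarrow> (u, v) \<in> E \<Longrightarrow> dlt ^ \<tau> * p 0 u v \<le> f 0 s + b 0 d"
    and R: "0 \<le> R"
    and start: "\<And>\<sigma>. \<sigma> \<le> t \<Longrightarrow> t < \<sigma> + n \<Longrightarrow> R \<le> min (source_ratio \<sigma>) (sink_ratio \<sigma>)"
  shows "t < \<sigma> \<Longrightarrow> \<sigma> \<le> t + n \<Longrightarrow> (1 + gain) * R \<le> min (source_ratio \<sigma>) (sink_ratio \<sigma>)"
proof (rule window_growth[OF gain_nonneg R start])
  fix \<tau> assume \<tau>: "t \<le> \<tau>"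
    and window: "\<And>\<sigma>. \<sigma> \<le> \<tau> \<Longrightarrow> \<tau> < \<sigma> + n \<Longrightarrow> R \<le> min (source_ratio \<sigma>) (sink_ratio \<sigma>)"
  have ratios: "R \<le> source_ratio \<sigma> \<and> R \<le> sink_ratio \<sigma>" if "\<sigma> \<in> {\<tau>, \<tau> - (m - 1), \<tau> - (n - 1)}" for \<sigma>
    using window[of \<sigma>] that t \<tau> lengths by auto
  have "dlt ^ \<tau> * (p 0 s (P1 1) + p 0 s (P2 1)) \<le> 2 * (f 0 s + b 0 d)"
    "dlt ^ \<tau> * (p 0 (P1 (m - 1)) d + p 0 (P2 (n - 1)) d) \<le> 2 * (f 0 s + b 0 d)"
    unfolding distrib_left using p_init_le[OF \<tau>] source_edges sink_edges by (smt (verit))+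
  then show "(1 + gain) * R \<le> min (source_ratio (Suc \<tau>)) (sink_ratio (Suc \<tau>))"
    using source_ratio_step[OF _ _ R] sink_ratio_step[OF _ _ R] ratios t \<tau> by simp
qed

definition window_min :: "nat \<Rightarrow> real" where
  "window_min t = Min ((\<lambda>i. source_ratio (t - i)) ` {..<n} \<union> (\<lambda>i. sink_ratio (t - i)) ` {..<n})"

lemma le_window_min_iff:
  "x \<le> window_min t \<longleftrightarrow> (\<forall>i < n. x \<le> min (source_ratio (t - i)) (sink_ratio (t - i)))"
  using lengths unfolding window_min_def by (subst Min_ge_iff) auto

lemma window_min_growth:
  assumes t: "n \<le> t"
    and p_init_le: "\<And>\<tau> u v. t \<le> \<tau> \<Longrightarrow> (u, v) \<in> E \<Longrightarrow> dlt ^ \<tau> * p 0 u v \<le> f 0 s + b 0 d"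
  shows "(1 + gain) * window_min t \<le> window_min (t + n)"
proof -
  define R where "R = window_min t"
  have "R \<le> window_min t" unfolding R_def ..
  then have window: "\<forall>i < n. R \<le> min (source_ratio (t - i)) (sink_ratio (t - i))"
    unfolding le_window_min_iff .
  have start: "R \<le> min (source_ratio \<sigma>) (sink_ratio \<sigma>)" if "\<sigma> \<le> t" "t < \<sigma> + n" for \<sigma>
  proof -
    have "t - \<sigma> < n" "t - (t - \<sigma>) = \<sigma>" using that by auto
    then show ?thesis using window by metis
  qed
  have "0 \<le> R"
    unfolding R_def le_window_min_iff using source_ratio_pos sink_ratio_pos
    by (auto intro: less_imp_le)
  note growth = ratio_window_growth[OF t p_init_le this start]
  show ?thesis unfolding R_def[symmetric] le_window_min_iff
  proof (intro allI impI)
    fix i assume "i < n"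
    then show "(1 + gain) * R \<le> min (source_ratio (t + n - i)) (sink_ratio (t + n - i))"
      using growth[of "t + n - i"] by simp
  qed
qed

end

lemma node1_eq_iff [simp]:
  "node1 m j = A k \<longleftrightarrow> j = k \<and> 0 < k \<and> k \<noteq> m" "A k = node1 m j \<longleftrightarrow> j = k \<and> 0 < k \<and> k \<noteq> m"
  "node1 m j = S \<longleftrightarrow> j = 0" "S = node1 m j \<longleftrightarrow> j = 0"
  "node1 m j = D \<longleftrightarrow> j \<noteq> 0 \<and> j = m" "D = node1 m j \<longleftrightarrow> j \<noteq> 0 \<and> j = m"
  "node1 m j \<noteq> B k" "B k \<noteq> node1 m j"
  by (auto simp: node1_def)

lemma node2_eq_iff [simp]:
  "node2 n j = B k \<longleftrightarrow> j = k \<and> 0 < k \<and> k \<noteq> n" "B k = node2 n j \<longleftrightarrow> j = k \<and> 0 < k \<and> k \<noteq> n"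
  "node2 n j = S \<longleftrightarrow> j = 0" "S = node2 n j \<longleftrightarrow> j = 0"
  "node2 n j = D \<longleftrightarrow> j \<noteq> 0 \<and> j = n" "D = node2 n j \<longleftrightarrow> j \<noteq> 0 \<and> j = n"
  "node2 n j \<noteq> A k" "A k \<noteq> node2 n j"
  by (auto simp: node2_def)

lemma finite_edges: "finite (edges m n)"
  unfolding edges_def by simp

lemma mem_edges_iff:
  "(u, v) \<in> edges m n \<longleftrightarrow>
     (\<exists>k<m. u = node1 m k \<and> v = node1 m (Suc k)) \<or> (\<exists>k<n. u = node2 n k \<and> v = node2 n (Suc k))"
  unfolding edges_def by auto

lemma branch_path_node1:
  assumes "0 < m"
  shows "branch_path (edges m n) S D (node1 m) m"
proof -
  have interior: "node1 m k \<noteq> S \<and> node1 m k \<noteq> D \<and>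
      {z. (z, node1 m k) \<in> edges m n} = {node1 m (k - 1)} \<and>
      {z. (node1 m k, z) \<in> edges m n} = {node1 m (Suc k)}" if "0 < k" "k < m" for k
  proof -
    have node: "node1 m k = A k" using that by (simp add: node1_def)
    show ?thesis using that unfolding node mem_edges_iff by (auto intro: exI[of _ "k - 1"])
  qed
  have "(node1 m k, node1 m (Suc k)) \<in> edges m n" if "k < m" for k
    using that unfolding mem_edges_iff by blast
  then show ?thesis using assms interior unfolding branch_path_def by simp
qed

lemma branch_path_node2:
  assumes "0 < n"
  shows "branch_path (edges m n) S D (node2 n) n"
proof -
  have interior: "node2 n k \<noteq> S \<and> node2 n k \<noteq> D \<and>
      {z. (z, node2 n k) \<in> edges m n} = {node2 n (k - 1)} \<and>
      {z. (node2 n k, z) \<in> edges m n} = {node2 n (Suc k)}" if "0 < k" "k < n" for k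
  proof -
    have node: "node2 n k = B k" using that by (simp add: node2_def)
    show ?thesis using that unfolding node mem_edges_iff by (auto intro: exI[of _ "k - 1"])
  qed
  have "(node2 n k, node2 n (Suc k)) \<in> edges m n" if "k < n" for k
    using that unfolding mem_edges_iff by blast
  then show ?thesis using assms interior unfolding branch_path_def by simp
qed

lemma two_branch_graph_edges:
  assumes "1 \<le> m" "m < n"
  shows "two_branch_graph (edges m n) S D (node1 m) m (node2 n) n"
proof
  show "branch_path (edges m n) S D (node1 m) m" "branch_path (edges m n) S D (node2 n) n"
    using assms by (simp_all add: branch_path_node1 branch_path_node2)
  show "{z. (S, z) \<in> edges m n} = {node1 m 1, node2 n 1}"
    using assms unfolding mem_edges_iff by auto
  show "{z. (z, D) \<in> edges m n} = {node1 m (m - 1), node2 n (n - 1)}"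
    using assms unfolding mem_edges_iff by (auto intro: exI[of _ "m - 1"] exI[of _ "n - 1"])
  show "node1 m 1 \<noteq> node2 n 1" "node1 m (m - 1) \<noteq> node2 n (n - 1)"
    using assms by (auto simp: node1_def node2_def)
qed (use assms in auto)

theorem mainTheorem14:
  fixes m n :: nat and dlt lam :: real and l :: "vtx \<Rightarrow> real"
    and p :: "nat \<Rightarrow> vtx \<Rightarrow> vtx \<Rightarrow> real" and f b :: "nat \<Rightarrow> vtx \<Rightarrow> real" and t :: nat
  assumes dyn: "dynamics (edges m n) S D dlt l p f b"
    and delta: "0 < dlt" "dlt < 1"
    and leak: "\<forall>v. l v = 0"
    and mn: "1 \<le> m" "m < n"
    and p0: "\<forall>(u, v) \<in> edges m n. p 0 u v > 0"
    and lam: "lam > 1"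
    and fs: "\<forall>t. f t S = lam ^ t * f 0 S"
    and bd: "\<forall>t. b t D = lam ^ t * b 0 D"
    and fs0: "f 0 S > 0" and bd0: "b 0 D > 0"
    and nonneg: "\<forall>v. f 0 v \<ge> 0 \<and> b 0 v \<ge> 0"
    and init: "\<forall>v. v \<noteq> S \<and> v \<noteq> D \<longrightarrow> f 0 v \<le> f 0 S \<and> b 0 v \<le> b 0 D"
    and tbig: "real t \<ge> real (max m n) +
        max 0 (Max ((\<lambda>(u, v). ln (p 0 u v / (f 0 S + b 0 D)) / ln (1 / dlt)) ` edges m n))"
  shows "r_min m n p (t + max m n) \<ge>
    (1 + min (f 0 S) (b 0 D) * (1 - dlt) * (lam - 1) / (6 * (f 0 S + b 0 D) * lam ^ m))
      * r_min m n p t"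
proof -
  interpret ant_system "edges m n" S D "node1 m" m "node2 n" n dlt lam p f b
  proof (intro ant_system.intro ant_system_axioms.intro two_branch_graph_edges[OF mn])
    have "l = (\<lambda>_. 0)" using leak by auto
    then show "dynamics (edges m n) S D dlt (\<lambda>_. 0) p f b" using dyn by simp
  qed (use delta lam p0 fs bd fs0 bd0 nonneg init in blast)+
  have L: "max m n = n" using mn by simp
  define M where "M = Max ((\<lambda>(u, v). ln (p 0 u v / (f 0 S + b 0 D)) / ln (1 / dlt)) ` edges m n)"
  have t: "n \<le> t" using tbig unfolding L by linarith
  have p_init_le: "dlt ^ \<tau> * p 0 u v \<le> f 0 S + b 0 D" if "t \<le> \<tau>" "(u, v) \<in> edges m n" for \<tau> u v
  proof (rule power_mult_le_of_log_ratio_le[OF delta p_pos])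
    have "ln (p 0 u v / (f 0 S + b 0 D)) / ln (1 / dlt) \<le> M"
      unfolding M_def using that(2) finite_edges by (auto intro!: Max_ge)
    then show "ln (p 0 u v / (f 0 S + b 0 D)) / ln (1 / dlt) \<le> real \<tau>"
      using tbig that(1) unfolding M_def[symmetric] by linarith
  qed (use that fs0 bd0 in auto)
  have "r_min m n p = window_min"
    by (auto simp: r_min_def window_min_def source_ratio_def sink_ratio_def r_s_def r_d_def L)
  then show ?thesis using window_min_growth[OF t p_init_le] unfolding L gain_def by simp
qed

end
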